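(* The disease-free equilibrium $E_0=\left(\frac{\Lambda}{\lambda},\frac{r\Lambda}{\mu\lambda},0,0\right)$ of the model is unstable if $\mathcal{R}_0>1$ and locally asymptotically stable if $\mathcal{R}_0<1$.
   Context: The model is $\dot S=\Lambda-F_1(S,I_1)-F_2(S,I_2)-\lambda S$, $\dot V_1=rS-(\mu+kI_2)V_1$, $\dot I_1=F_1(S,I_1)-\alpha_1I_1$, $\dot I_2=F_2(S,I_2)+kI_2V_1-\alpha_2I_2$ on $\mathbb{R}^4_+$. The constants $\Lambda,\mu,r,k,\gamma_1,\gamma_2>0$ and $v_1,v_2\ge0$; $\lambda=r+\mu$ and $\alpha_i=\gamma_i+v_i+\mu$. For $i=1,2$ the incidence functions satisfy: - (H1) $F_i(S,I_i)=I_if_i(S,I_i)$ with $F_i,f_i\in C^2(\mathbb{R}^2_+,\mathbb{R}_+)$ and $F_i(0,I_i)=F_i(S,0)=0$; - (H2) $\partial f_i/\partial S>0$ and $\partial f_i/\partial I_i\le0$; - (H3) $\lim_{I_i\to0^+}F_i(S,I_i)/I_i$ exists and is positive for $S>0$. Let $S^0=\Lambda/\lambda$ and $\sigma_i=\frac{\partial F_i}{\partial I_i}(S^0,0)$. Set $\mathcal{R}_1=\sigma_1/\alpha_1$, $\mathcal{R}_2=\sigma_2/\alpha_2+\frac{kr\Lambda}{\alpha_2\mu\lambda}$ and $\mathcal{R}_0=\max\{\mathcal{R}_1,\mathcal{R}_2\}$. *)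

theory Defs
  imports "HOL-Analysis.Analysis"
begin

definition C2_on :: "(real \<times> real) set \<Rightarrow> (real \<times> real \<Rightarrow> real) \<Rightarrow> bool" where
  "C2_on U g \<longleftrightarrow>
     (\<exists>g' :: real \<times> real \<Rightarrow> ((real \<times> real) \<Rightarrow>\<^sub>L real).
      \<exists>g'' :: real \<times> real \<Rightarrow> ((real \<times> real) \<Rightarrow>\<^sub>L ((real \<times> real) \<Rightarrow>\<^sub>L real)).
        (\<forall>p\<in>U. (g has_derivative blinfun_apply (g' p)) (at p)
               \<and> (g' has_derivative blinfun_apply (g'' p)) (at p))
        \<and> continuous_on U g'')"

definition C2_on_quadrant :: "(real \<Rightarrow> real \<Rightarrow> real) \<Rightarrow> bool" where
  "C2_on_quadrant F \<longleftrightarrow>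
     (\<exists>U. open U \<and> {p. fst p \<ge> 0 \<and> snd p \<ge> 0} \<subseteq> U \<and> C2_on U (\<lambda>p. F (fst p) (snd p)))"

definition orthant4 :: "(real \<times> real \<times> real \<times> real) set" where
  "orthant4 = {(S, V, I1, I2). S \<ge> 0 \<and> V \<ge> 0 \<and> I1 \<ge> 0 \<and> I2 \<ge> 0}"

definition model_rhs ::
  "real \<Rightarrow> real \<Rightarrow> real \<Rightarrow> real \<Rightarrow> real \<Rightarrow> real \<Rightarrow> real \<Rightarrow> real
   \<Rightarrow> (real \<Rightarrow> real \<Rightarrow> real) \<Rightarrow> (real \<Rightarrow> real \<Rightarrow> real)
   \<Rightarrow> real \<times> real \<times> real \<times> real \<Rightarrow> real \<times> real \<times> real \<times> real" where
  "model_rhs \<Lambda> \<mu> r k \<gamma>1 \<gamma>2 v1 v2 F1 F2 = (\<lambda>(S, V, I1, I2).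
     (\<Lambda> - F1 S I1 - F2 S I2 - (r + \<mu>) * S,
      r * S - (\<mu> + k * I2) * V,
      F1 S I1 - (\<gamma>1 + v1 + \<mu>) * I1,
      F2 S I2 + k * I2 * V - (\<gamma>2 + v2 + \<mu>) * I2))"

definition is_solution ::
  "('a::real_normed_vector \<Rightarrow> 'a) \<Rightarrow> 'a set \<Rightarrow> (real \<Rightarrow> 'a) \<Rightarrow> bool" where
  "is_solution X D x \<longleftrightarrow>
     (\<forall>t\<ge>0. x t \<in> D \<and> (x has_vector_derivative X (x t)) (at t within {0..}))"

definition lyapunov_stable ::
  "('a::real_normed_vector \<Rightarrow> 'a) \<Rightarrow> 'a set \<Rightarrow> 'a \<Rightarrow> bool" where
  "lyapunov_stable X D e \<longleftrightarrow>
     (\<forall>\<epsilon>>0. \<exists>\<delta>>0. \<forall>x. is_solution X D x \<and> dist (x 0) e < \<delta> \<longrightarrow>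
        (\<forall>t\<ge>0. dist (x t) e < \<epsilon>))"

definition locally_asymptotically_stable ::
  "('a::real_normed_vector \<Rightarrow> 'a) \<Rightarrow> 'a set \<Rightarrow> 'a \<Rightarrow> bool" where
  "locally_asymptotically_stable X D e \<longleftrightarrow>
     lyapunov_stable X D e \<and>
     (\<exists>\<eta>>0. \<forall>x. is_solution X D x \<and> dist (x 0) e < \<eta> \<longrightarrow> (x \<longlongrightarrow> e) at_top)"

definition unstable ::
  "('a::real_normed_vector \<Rightarrow> 'a) \<Rightarrow> 'a set \<Rightarrow> 'a \<Rightarrow> bool" where
  "unstable X D e \<longleftrightarrow> \<not> lyapunov_stable X D e"

text \<open>Hypotheses (H1)-(H3) on an incidence function F = I f.\<close>
definition incidence_ok :: "(real \<Rightarrow> real \<Rightarrow> real) \<Rightarrow> (real \<Rightarrow> real \<Rightarrow> real) \<Rightarrow> bool" where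
  "incidence_ok F f \<longleftrightarrow>
     C2_on_quadrant F \<and> C2_on_quadrant f \<and>
     (\<forall>S I. S \<ge> 0 \<longrightarrow> I \<ge> 0 \<longrightarrow> F S I = I * f S I \<and> F S I \<ge> 0 \<and> f S I \<ge> 0) \<and>
     (\<forall>I\<ge>0. F 0 I = 0) \<and> (\<forall>S\<ge>0. F S 0 = 0) \<and>
     (\<forall>S I. S \<ge> 0 \<longrightarrow> I \<ge> 0 \<longrightarrow>
        deriv (\<lambda>s. f s I) S > 0 \<and> deriv (\<lambda>i. f S i) I \<le> 0) \<and>
     (\<forall>S>0. \<exists>L>0. ((\<lambda>I. F S I / I) \<longlongrightarrow> L) (at_right 0))"

end

theory Submission
  imports Defs
begin

(*
  With S0 = \<Lambda>/(r+\<mu>) and V0 = r S0/\<mu>, the function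
    W = (S - S0)^2 + A (V - V0)^2 + I1 + I2,   A = (r+\<mu>) \<mu> / r^2,
  satisfies W' \<le> -\<kappa> W near E0 on the orthant when R1, R2 < 1. The weight A makes the quadratic part
  of W' negative definite, and W' contains the linear terms I1 (f1 - \<alpha>1) and I2 (f2 + k V - \<alpha>2),
  whose coefficients tend to \<alpha>1 (R1 - 1) and \<alpha>2 (R2 - 1) at E0 because \<sigma>i = fi(S0, 0).
  Hence W decays exponentially along solutions starting near E0.

  If R1 > 1 (or R2 > 1), the same coefficient is positive near E0, so I1' \<ge> c I1
  (or I2' \<ge> c I2) as long as a solution stays near E0, and an arbitrarily small infection grows
  until it leaves a fixed neighbourhood. This argument needs solutions from every initial state.
  They are obtained by Picard iteration for the field truncated to a box [0, M]^4. The truncated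
  field is globally Lipschitz, and its solutions never leave {z \<ge> 0, S + V + I1 + I2 \<le> M}.
*)

section \<open>Global solutions of Lipschitz differential equations\<close>

lemma has_integral_power_div_fact:
  fixes c t :: real
  assumes "0 \<le> t"
  shows "((\<lambda>s. c * s^n / fact n) has_integral c * t^Suc n / fact (Suc n)) {0..t}"
proof -
  have "((\<lambda>s. c * s^n / fact n) has_integral
          (\<lambda>s. c * s^Suc n / fact (Suc n)) t - (\<lambda>s. c * s^Suc n / fact (Suc n)) 0) {0..t}"
  proof (rule fundamental_theorem_of_calculus[OF assms])
    fix x
    have "(fact (Suc n) :: real) = real (Suc n) * fact n"
      by (simp only: fact_Suc of_nat_mult)
    then have "c * (real (Suc n) * x^n) / fact (Suc n) = c * x^n / fact n"
      by (simp del: of_nat_Suc)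
    moreover have "((\<lambda>s. c * s^Suc n / fact (Suc n)) has_real_derivative
                      c * (real (Suc n) * x^n) / fact (Suc n)) (at x within {0..t})"
      by (intro derivative_eq_intros) auto
    ultimately show "((\<lambda>s. c * s^Suc n / fact (Suc n)) has_vector_derivative c * x^n / fact n)
                       (at x within {0..t})"
      by (simp add: has_real_derivative_iff_has_vector_derivative)
  qed
  then show ?thesis by simp
qed

lemma at_within_Icc_eq_at_within_Ici:
  fixes t T :: real
  assumes "0 \<le> t" "t < T"
  shows "at t within {0..T} = at t within {0..}"
proof (rule at_within_nhd[of _ "{..<T}"])
  show "{0..T} \<inter> {..<T} - {t} = {0..} \<inter> {..<T} - {t}" by auto
qed (use assms in auto)

definition picard_iterate :: "('a::banach \<Rightarrow> 'a) \<Rightarrow> 'a \<Rightarrow> nat \<Rightarrow> real \<Rightarrow> 'a" where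
  "picard_iterate G x0 n = ((\<lambda>q t. x0 + integral {0..t} (\<lambda>s. G (q s))) ^^ n) (\<lambda>_. x0)"

lemma picard_iterate_0 [simp]: "picard_iterate G x0 0 = (\<lambda>_. x0)"
  by (simp add: picard_iterate_def)

lemma picard_iterate_Suc:
  "picard_iterate G x0 (Suc n) t = x0 + integral {0..t} (\<lambda>s. G (picard_iterate G x0 n s))"
  by (simp add: picard_iterate_def)

context
  fixes G :: "'a::banach \<Rightarrow> 'a" and L :: real and x0 :: 'a
  assumes lipschitz: "L-lipschitz_on UNIV G"
begin

lemma continuous_on_field_picard_iterate: "continuous_on {0..T} (\<lambda>s. G (picard_iterate G x0 n s))"
proof (induction n)
  case (Suc n)
  then have "continuous_on {0..T} (picard_iterate G x0 (Suc n))"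
    unfolding picard_iterate_Suc[abs_def]
    by (intro continuous_intros indefinite_integral_continuous_1 integrable_continuous_real)
  then show ?case
    by (rule continuous_on_compose2[OF lipschitz_on_continuous_on[OF lipschitz]]) auto
qed simp

lemma field_picard_iterate_integrable: "(\<lambda>s. G (picard_iterate G x0 n s)) integrable_on {0..t}"
  by (intro integrable_continuous_real continuous_on_field_picard_iterate)

lemma picard_iterate_step_le:
  assumes "0 \<le> t"
  shows "norm (picard_iterate G x0 (Suc n) t - picard_iterate G x0 n t)
           \<le> norm (G x0) * L^n * t^Suc n / fact (Suc n)"
  using assms
proof (induction n arbitrary: t)
  case 0
  have "norm (integral {0..t} (\<lambda>s. G x0)) \<le> integral {0..t} (\<lambda>s. norm (G x0) * s^0 / fact 0)"
    by (intro integral_norm_bound_integral) auto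
  with has_integral_power_div_fact[OF 0, of "norm (G x0)" 0] 0 show ?case
    by (simp add: picard_iterate_Suc integral_unique)
next
  case (Suc n)
  let ?p = "picard_iterate G x0"
  let ?c = "L * norm (G x0) * L^n"
  have "norm (?p (Suc (Suc n)) t - ?p (Suc n) t)
          = norm (integral {0..t} (\<lambda>s. G (?p (Suc n) s) - G (?p n s)))"
    unfolding picard_iterate_Suc[of G x0 "Suc n" t] picard_iterate_Suc[of G x0 n t]
    by (simp add: integral_diff field_picard_iterate_integrable)
  also have "\<dots> \<le> integral {0..t} (\<lambda>s. ?c * s^Suc n / fact (Suc n))"
  proof (intro integral_norm_bound_integral integrable_diff field_picard_iterate_integrable)
    show "(\<lambda>s. ?c * s^Suc n / fact (Suc n)) integrable_on {0..t}"
      using has_integral_power_div_fact[OF Suc.prems] by blast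
    fix s assume s: "s \<in> {0..t}"
    have "norm (G (?p (Suc n) s) - G (?p n s)) \<le> L * norm (?p (Suc n) s - ?p n s)"
      using lipschitz_onD[OF lipschitz] by (simp add: dist_norm)
    also have "\<dots> \<le> L * (norm (G x0) * L^n * s^Suc n / fact (Suc n))"
      using Suc.IH[of s] s lipschitz_on_nonneg[OF lipschitz] by (intro mult_left_mono) auto
    finally show "norm (G (?p (Suc n) s) - G (?p n s)) \<le> ?c * s^Suc n / fact (Suc n)"
      by (simp add: mult.assoc)
  qed
  also have "\<dots> = ?c * t^Suc (Suc n) / fact (Suc (Suc n))"
    by (rule integral_unique[OF has_integral_power_div_fact[OF Suc.prems]])
  finally show ?case by (simp add: mult_ac)
qed

text \<open>The Picard iterates converge uniformly on every \<open>[0, T]\<close> by the Weierstrass M-test against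
  the exponential series.\<close>
lemma picard_iterate_uniform_limit:
  obtains x where "\<And>T. uniform_limit {0..T} (picard_iterate G x0) x sequentially"
proof
  let ?p = "picard_iterate G x0"
  let ?x = "\<lambda>t. x0 + (\<Sum>i. ?p (Suc i) t - ?p i t)"
  fix T :: real
  let ?M = "\<lambda>i::nat. norm (G x0) * T * (inverse (fact i :: real) * (L * T)^i)"
  have L: "0 \<le> L" using lipschitz_on_nonneg[OF lipschitz] .
  have "norm (?p (Suc i) t - ?p i t) \<le> ?M i" if "t \<in> {0..T}" for i t
  proof -
    have "norm (?p (Suc i) t - ?p i t) \<le> norm (G x0) * L^i * t^Suc i / fact (Suc i)"
      using that by (intro picard_iterate_step_le) auto
    also have "\<dots> \<le> norm (G x0) * L^i * T^Suc i / fact (Suc i)"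
      using that L by (intro divide_right_mono mult_left_mono power_mono) auto
    also have "\<dots> \<le> norm (G x0) * L^i * T^Suc i / fact i"
      using that L by (intro divide_left_mono mult_nonneg_nonneg fact_mono) auto
    also have "\<dots> = ?M i"
      by (simp add: field_simps)
    finally show ?thesis .
  qed
  moreover have "summable ?M"
    by (intro summable_mult summable_exp)
  ultimately have "uniform_limit {0..T} (\<lambda>n t. \<Sum>i<n. ?p (Suc i) t - ?p i t)
                     (\<lambda>t. \<Sum>i. ?p (Suc i) t - ?p i t) sequentially"
    by (rule Weierstrass_m_test)
  then have "uniform_limit {0..T} (\<lambda>n t. x0 + (\<Sum>i<n. ?p (Suc i) t - ?p i t)) ?x sequentially"
    by (intro uniform_limit_add uniform_limit_const)
  moreover have "x0 + (\<Sum>i<n. ?p (Suc i) t - ?p i t) = ?p n t" for n t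
    using sum_lessThan_telescope[of "\<lambda>i. ?p i t" n] by simp
  ultimately show "uniform_limit {0..T} ?p ?x sequentially"
    by simp
qed

lemma lipschitz_ode_solution_exists:
  obtains x where "x 0 = x0" "\<And>t. 0 \<le> t \<Longrightarrow> (x has_vector_derivative G (x t)) (at t within {0..})"
proof -
  let ?p = "picard_iterate G x0"
  obtain x where ul: "\<And>T. uniform_limit {0..T} ?p x sequentially"
    using picard_iterate_uniform_limit by blast
  have ulG: "uniform_limit {0..T} (\<lambda>n s. G (?p n s)) (\<lambda>s. G (x s)) sequentially" for T
    using ul lipschitz_on_uniformly_continuous[OF lipschitz]
    by (rule uniform_limit_compose_uniformly_continuous_on) auto
  have cont: "continuous_on {0..T} (\<lambda>s. G (x s))" for T
    by (rule uniform_limit_theorem[OF _ ulG]) (simp_all add: continuous_on_field_picard_iterate)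
  have x_eq: "x t = x0 + integral {0..t} (\<lambda>s. G (x s))" if "0 \<le> t" for t
  proof -
    obtain I J where I: "\<And>n. ((\<lambda>s. G (?p n s)) has_integral I n) {0..t}"
      and J: "((\<lambda>s. G (x s)) has_integral J) {0..t}" and IJ: "I \<longlonglongrightarrow> J"
      by (rule uniform_limit_integral[OF ulG continuous_on_field_picard_iterate]) auto
    have "(\<lambda>n. ?p (Suc n) t) \<longlonglongrightarrow> x0 + J"
      unfolding picard_iterate_Suc integral_unique[OF I] by (intro tendsto_add tendsto_const IJ)
    moreover have "(\<lambda>n. ?p (Suc n) t) \<longlonglongrightarrow> x t"
      using tendsto_uniform_limitI[OF ul, of t] that LIMSEQ_Suc by auto
    ultimately show ?thesis
      using J LIMSEQ_unique integral_unique by metis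
  qed
  show thesis
  proof
    show "x 0 = x0" using x_eq[of 0] by simp
    fix t :: real assume t: "0 \<le> t"
    have "((\<lambda>u. integral {0..u} (\<lambda>s. G (x s))) has_vector_derivative G (x t))
            (at t within {0..t + 1})"
      by (rule integral_has_vector_derivative[OF cont]) (use t in auto)
    then have "((\<lambda>u. x0 + integral {0..u} (\<lambda>s. G (x s))) has_vector_derivative G (x t))
                 (at t within {0..t + 1})"
      by (intro derivative_eq_intros) auto
    then have "(x has_vector_derivative G (x t)) (at t within {0..t + 1})"
      by (rule has_vector_derivative_transform_within[where d=1]) (use t x_eq in auto)
    then show "(x has_vector_derivative G (x t)) (at t within {0..})"
      using at_within_Icc_eq_at_within_Ici[of t "t + 1"] t by simp
  qed
qed

end

section \<open>Comparison principles for scalar functions\<close>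

context
  fixes y y' :: "real \<Rightarrow> real"
  assumes cont: "continuous_on {0..} y"
    and deriv: "\<And>t. 0 < t \<Longrightarrow> (y has_real_derivative y' t) (at t)"
begin

lemma decreasing_if_deriv_nonpos:
  assumes "0 \<le> a" "a \<le> b" "\<And>t. a < t \<Longrightarrow> t < b \<Longrightarrow> y' t \<le> 0"
  shows "y b \<le> y a"
proof (rule DERIV_nonpos_imp_decreasing_open[OF \<open>a \<le> b\<close>])
  show "continuous_on {a..b} y"
    using cont by (rule continuous_on_subset) (use assms in auto)
next
  fix t assume "a < t" "t < b"
  then show "\<exists>d. (y has_real_derivative d) (at t) \<and> d \<le> 0"
    using assms deriv[of t] by auto
qed

lemma upper_bound_preserved:
  assumes "y 0 \<le> M" "\<And>t. 0 < t \<Longrightarrow> M < y t \<Longrightarrow> y' t \<le> 0" "0 \<le> t"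
  shows "y t \<le> M"
proof (rule ccontr)
  assume "\<not> y t \<le> M"
  define T where "T = {s \<in> {0..t}. y s \<le> M}"
  have "closed T"
    unfolding T_def by (intro continuous_on_closed_Collect_le continuous_on_subset[OF cont]) auto
  then have "compact T"
    by (auto intro: bounded_subset[of "{0..t}"] simp: compact_eq_bounded_closed T_def)
  moreover have "0 \<in> T"
    using assms by (simp add: T_def)
  ultimately obtain t0 where t0: "t0 \<in> T" "\<And>s. s \<in> T \<Longrightarrow> s \<le> t0"
    using compact_attains_sup[of T] by auto
  have "y t \<le> y t0"
  proof (rule decreasing_if_deriv_nonpos)
    fix s assume "t0 < s" "s < t"
    then have "s \<notin> T" using t0(2) by fastforce
    with \<open>t0 < s\<close> \<open>s < t\<close> t0(1) show "y' s \<le> 0"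
      using assms(2) by (auto simp: T_def)
  qed (use t0(1) in \<open>auto simp: T_def\<close>)
  with \<open>\<not> y t \<le> M\<close> t0(1) show False by (simp add: T_def)
qed

lemma strict_upper_bound_preserved:
  assumes "y 0 < M" "\<And>t. 0 < t \<Longrightarrow> y t \<le> M \<Longrightarrow> y' t \<le> 0" "0 \<le> t"
  shows "y t < M"
proof (rule ccontr)
  assume "\<not> y t < M"
  define T where "T = {s \<in> {0..t}. M \<le> y s}"
  have "closed T"
    unfolding T_def by (intro continuous_on_closed_Collect_le continuous_on_subset[OF cont]) auto
  then have "compact T"
    by (auto intro: bounded_subset[of "{0..t}"] simp: compact_eq_bounded_closed T_def)
  moreover have "t \<in> T"
    using assms \<open>\<not> y t < M\<close> by (simp add: T_def)
  ultimately obtain t0 where t0: "t0 \<in> T" "\<And>s. s \<in> T \<Longrightarrow> t0 \<le> s"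
    using compact_attains_inf[of T] by auto
  have "y t0 \<le> y 0"
  proof (rule decreasing_if_deriv_nonpos)
    fix s assume "0 < s" "s < t0"
    then have "s \<notin> T" using t0(2) by fastforce
    with \<open>0 < s\<close> \<open>s < t0\<close> t0(1) show "y' s \<le> 0"
      using assms(2) by (auto simp: T_def)
  qed (use t0(1) in \<open>auto simp: T_def\<close>)
  with assms(1) t0(1) show False by (simp add: T_def)
qed

lemma exp_lower_bound:
  assumes "\<And>t. 0 < t \<Longrightarrow> c * y t \<le> y' t" "0 \<le> t"
  shows "y 0 * exp (c * t) \<le> y t"
proof -
  have "y 0 * exp (- c * 0) \<le> y t * exp (- c * t)"
  proof (rule DERIV_nonneg_imp_increasing_open[OF \<open>0 \<le> t\<close>])
    fix s :: real assume "0 < s"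
    then have "((\<lambda>s. y s * exp (- c * s)) has_real_derivative
                 (y' s - c * y s) * exp (- c * s)) (at s)"
      by (auto intro!: derivative_eq_intros deriv simp: algebra_simps)
    with assms(1)[OF \<open>0 < s\<close>]
    show "\<exists>d. ((\<lambda>s. y s * exp (- c * s)) has_real_derivative d) (at s) \<and> 0 \<le> d"
      by force
  qed (intro continuous_intros continuous_on_subset[OF cont]; auto)
  then have "y 0 * exp (c * t) \<le> y t * exp (- c * t) * exp (c * t)"
    by (intro mult_right_mono) auto
  then show ?thesis by (simp add: mult.assoc flip: exp_add)
qed

end

section \<open>Stability and instability along solutions\<close>

lemma solution_continuous_on:
  assumes "is_solution X D x"
  shows "continuous_on {0..} x"
  using assms unfolding is_solution_def by (auto intro: continuous_on_vector_derivative)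

lemma solution_has_vector_derivative_at:
  assumes "is_solution X D x" "0 < t"
  shows "(x has_vector_derivative X (x t)) (at t)"
proof -
  have "at t within {0..} = at t"
    using \<open>0 < t\<close> by (intro at_within_interior) auto
  with assms show ?thesis unfolding is_solution_def by (metis less_imp_le)
qed

lemma solution_comp_has_real_derivative:
  fixes W :: "'a::real_normed_vector \<Rightarrow> real"
  assumes "is_solution X D x" "0 < t" "\<And>z. (W has_derivative W' z) (at z)"
  shows "((\<lambda>s. W (x s)) has_real_derivative W' (x t) (X (x t))) (at t)"
proof -
  have "((\<lambda>s. W (x s)) has_derivative (\<lambda>h. W' (x t) (h *\<^sub>R X (x t)))) (at t)"
    using solution_has_vector_derivative_at[OF assms(1,2)] assms(3)
    unfolding has_vector_derivative_def by (rule has_derivative_compose)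
  moreover have "W' (x t) (h *\<^sub>R X (x t)) = h * W' (x t) (X (x t))" for h
    using linear_scale[OF has_derivative_linear[OF assms(3)]] by simp
  ultimately show ?thesis
    by (simp add: has_field_derivative_def mult.commute[of _ "W' (x t) (X (x t))"])
qed

lemma solution_comp_continuous_on:
  assumes "is_solution X D x" "\<And>z. (W has_derivative W' z) (at z)"
  shows "continuous_on {0..} (\<lambda>s. W (x s))"
proof -
  have "continuous_on UNIV W"
    using assms(2) by (intro has_derivative_continuous_on) (auto intro: has_derivative_at_withinI)
  then show ?thesis
    by (rule continuous_on_compose2[OF _ solution_continuous_on[OF assms(1)]]) auto
qed

lemma solution_linear_upper_bound:
  fixes p :: "'a::real_normed_vector \<Rightarrow> real"
  assumes y: "is_solution G D y" and p: "bounded_linear p"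
    and "p (y 0) \<le> M" "\<And>z. z \<in> D \<Longrightarrow> M < p z \<Longrightarrow> p (G z) \<le> 0" "0 \<le> t"
  shows "p (y t) \<le> M"
proof (rule upper_bound_preserved[where y = "\<lambda>s. p (y s)" and y' = "\<lambda>s. p (G (y s))"])
  show "continuous_on {0..} (\<lambda>s. p (y s))"
    by (rule solution_comp_continuous_on[OF y bounded_linear_imp_has_derivative[OF p]])
  show "((\<lambda>s. p (y s)) has_real_derivative p (G (y s))) (at s)" if "0 < s" for s
    by (rule solution_comp_has_real_derivative[OF y that bounded_linear_imp_has_derivative[OF p]])
  show "p (G (y s)) \<le> 0" if "0 < s" "M < p (y s)" for s
    using assms(4) that y by (simp add: is_solution_def)
qed (use assms in auto)

lemma unstable_if_expanding_coordinate:
  fixes X :: "'a::real_normed_vector \<Rightarrow> 'a" and p :: "'a \<Rightarrow> real"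
  assumes solutions: "\<And>z. z \<in> D \<Longrightarrow> \<exists>x. is_solution X D x \<and> x 0 = z"
    and p: "bounded_linear p" "\<And>z. \<bar>p z\<bar> \<le> norm z" "p e = 0"
    and expanding: "0 < \<rho>" "0 < c" "\<And>z. z \<in> D \<Longrightarrow> dist z e < \<rho> \<Longrightarrow> c * p z \<le> p (X z)"
    and seeds: "\<And>\<delta>. 0 < \<delta> \<Longrightarrow> \<exists>z\<in>D. dist z e < \<delta> \<and> 0 < p z"
  shows "unstable X D e"
  unfolding unstable_def lyapunov_stable_def
proof
  assume "\<forall>\<epsilon>>0. \<exists>\<delta>>0. \<forall>x. is_solution X D x \<and> dist (x 0) e < \<delta> \<longrightarrow> (\<forall>t\<ge>0. dist (x t) e < \<epsilon>)"
  with \<open>0 < \<rho>\<close> obtain \<delta> where "0 < \<delta>"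
    and stable: "\<And>x. is_solution X D x \<Longrightarrow> dist (x 0) e < \<delta> \<Longrightarrow> \<forall>t\<ge>0. dist (x t) e < \<rho>"
    by blast
  obtain z where "z \<in> D" "dist z e < \<delta>" "0 < p z"
    using seeds[OF \<open>0 < \<delta>\<close>] by blast
  then obtain x where x: "is_solution X D x" "x 0 = z"
    using solutions by blast
  with \<open>dist z e < \<delta>\<close> have close: "dist (x t) e < \<rho>" if "0 \<le> t" for t
    using stable that by auto
  have p_below: "p (x t) < \<rho>" if "0 \<le> t" for t
  proof -
    have "p (x t) = p (x t - e)" using p(3) by (simp add: linear_diff[OF bounded_linear.linear[OF p(1)]])
    also have "\<dots> \<le> norm (x t - e)" using p(2) abs_le_D1 by blast
    finally show ?thesis using close[OF that] by (simp add: dist_norm)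
  qed
  define t where "t = ln (\<rho> / p z) / c"
  have "p z < \<rho>" using p_below[of 0] x by simp
  then have "exp (c * t) = \<rho> / p z" "0 \<le> t"
    using \<open>0 < p z\<close> \<open>0 < c\<close> by (simp_all add: t_def)
  moreover have "p (x 0) * exp (c * t) \<le> p (x t)"
  proof (rule exp_lower_bound)
    show "continuous_on {0..} (\<lambda>s. p (x s))"
      by (rule solution_comp_continuous_on[OF x(1) bounded_linear_imp_has_derivative[OF p(1)]])
    show "((\<lambda>s. p (x s)) has_real_derivative p (X (x s))) (at s)" if "0 < s" for s
      by (rule solution_comp_has_real_derivative[OF x(1) that bounded_linear_imp_has_derivative[OF p(1)]])
    show "c * p (x s) \<le> p (X (x s))" if "0 < s" for s
      using expanding(3) close x(1) that unfolding is_solution_def by auto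
  qed fact
  ultimately show False
    using p_below[of t] x \<open>0 < p z\<close> by simp
qed

context
  fixes X :: "'a::real_normed_vector \<Rightarrow> 'a" and D e and W :: "'a \<Rightarrow> real" and W' \<rho> \<kappa>
  assumes W_deriv: "\<And>z. (W has_derivative W' z) (at z)"
    and W_nonneg: "\<And>z. z \<in> D \<Longrightarrow> 0 \<le> W z"
    and W_decay: "0 < \<kappa>" "\<And>z. z \<in> D \<Longrightarrow> dist z e < \<rho> \<Longrightarrow> W' z (X z) \<le> - \<kappa> * W z"
begin

context
  fixes x \<eta>
  assumes x: "is_solution X D x"
    and sublevel_close: "\<And>z. z \<in> D \<Longrightarrow> W z \<le> \<eta> \<Longrightarrow> dist z e < \<rho>"
    and start: "W (x 0) < \<eta>"
begin

lemma lyapunov_sublevel_invariant: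
  assumes "0 \<le> t"
  shows "W (x t) < \<eta>"
proof (rule strict_upper_bound_preserved[OF solution_comp_continuous_on[OF x W_deriv]
      solution_comp_has_real_derivative[OF x _ W_deriv] start _ assms])
  fix s :: real assume "0 < s" "W (x s) \<le> \<eta>"
  moreover have "x s \<in> D" using x \<open>0 < s\<close> by (simp add: is_solution_def)
  ultimately have "W' (x s) (X (x s)) \<le> - \<kappa> * W (x s)"
    using sublevel_close W_decay(2) by blast
  also have "\<dots> \<le> 0" using W_nonneg[OF \<open>x s \<in> D\<close>] W_decay(1) by simp
  finally show "W' (x s) (X (x s)) \<le> 0" .
qed

lemma lyapunov_exp_decay:
  assumes "0 \<le> t"
  shows "W (x t) \<le> W (x 0) * exp (- \<kappa> * t)"
proof -
  have "- W (x 0) * exp (- \<kappa> * t) \<le> - W (x t)"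
  proof (rule exp_lower_bound[where y = "\<lambda>s. - W (x s)"])
    show "continuous_on {0..} (\<lambda>s. - W (x s))"
      by (intro continuous_intros solution_comp_continuous_on[OF x W_deriv])
    fix s :: real assume "0 < s"
    then show "((\<lambda>s. - W (x s)) has_real_derivative - W' (x s) (X (x s))) (at s)"
      by (intro derivative_intros solution_comp_has_real_derivative[OF x _ W_deriv])
    have "x s \<in> D" using x \<open>0 < s\<close> by (simp add: is_solution_def)
    moreover have "W (x s) \<le> \<eta>" using lyapunov_sublevel_invariant[of s] \<open>0 < s\<close> by simp
    ultimately show "- \<kappa> * - W (x s) \<le> - W' (x s) (X (x s))"
      using sublevel_close W_decay(2) by fastforce
  qed fact
  then show ?thesis by simp
qed

end

context
  assumes W_zero: "W e = 0" and "0 < \<rho>"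
    and W_small: "\<And>\<epsilon>. 0 < \<epsilon> \<Longrightarrow> \<exists>\<eta>>0. \<forall>z\<in>D. W z < \<eta> \<longrightarrow> dist z e < \<epsilon>"
begin

lemma lyapunov_trapping:
  assumes "0 < \<epsilon>"
  obtains \<delta> where "0 < \<delta>"
    "\<And>x t. is_solution X D x \<Longrightarrow> dist (x 0) e < \<delta> \<Longrightarrow> 0 \<le> t \<Longrightarrow> dist (x t) e < \<epsilon>"
    "\<And>x t. is_solution X D x \<Longrightarrow> dist (x 0) e < \<delta> \<Longrightarrow> 0 \<le> t \<Longrightarrow>
             W (x t) \<le> W (x 0) * exp (- \<kappa> * t)"
proof -
  obtain \<eta>0 where "0 < \<eta>0" and \<eta>0: "\<And>z. z \<in> D \<Longrightarrow> W z < \<eta>0 \<Longrightarrow> dist z e < \<rho>"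
    using W_small[OF \<open>0 < \<rho>\<close>] by blast
  obtain \<eta>\<epsilon> where "0 < \<eta>\<epsilon>" and \<eta>\<epsilon>: "\<And>z. z \<in> D \<Longrightarrow> W z < \<eta>\<epsilon> \<Longrightarrow> dist z e < \<epsilon>"
    using W_small[OF \<open>0 < \<epsilon>\<close>] by blast
  define \<eta> where "\<eta> = min \<eta>\<epsilon> \<eta>0 / 2"
  have "0 < \<eta>" "\<eta> < \<eta>\<epsilon>" "\<eta> < \<eta>0"
    using \<open>0 < \<eta>\<epsilon>\<close> \<open>0 < \<eta>0\<close> by (auto simp: \<eta>_def)
  then have close: "\<And>z. z \<in> D \<Longrightarrow> W z \<le> \<eta> \<Longrightarrow> dist z e < \<rho>"
    using \<eta>0 by fastforce
  obtain \<delta> where "0 < \<delta>" and \<delta>: "\<And>z. dist z e < \<delta> \<Longrightarrow> W z < \<eta>"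
    using has_derivative_continuous[OF W_deriv, of e] \<open>0 < \<eta>\<close> W_zero
    unfolding continuous_at_eps_delta by (metis dist_commute dist_real_def abs_less_iff diff_zero)
  show thesis
  proof (rule that[OF \<open>0 < \<delta>\<close>])
    fix x and t :: real
    assume x: "is_solution X D x" and "dist (x 0) e < \<delta>" "0 \<le> t"
    then have "W (x 0) < \<eta>" "x t \<in> D"
      using \<delta> by (auto simp: is_solution_def)
    then show "dist (x t) e < \<epsilon>"
      using lyapunov_sublevel_invariant[OF x close _ \<open>0 \<le> t\<close>] \<open>\<eta> < \<eta>\<epsilon>\<close> \<eta>\<epsilon> by force
    show "W (x t) \<le> W (x 0) * exp (- \<kappa> * t)"
      using lyapunov_exp_decay[OF x close \<open>W (x 0) < \<eta>\<close> \<open>0 \<le> t\<close>] .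
  qed
qed

lemma locally_asymptotically_stable_if_lyapunov: "locally_asymptotically_stable X D e"
  unfolding locally_asymptotically_stable_def lyapunov_stable_def
proof (intro conjI allI impI)
  show "\<exists>\<delta>>0. \<forall>x. is_solution X D x \<and> dist (x 0) e < \<delta> \<longrightarrow> (\<forall>t\<ge>0. dist (x t) e < \<epsilon>)"
    if "0 < \<epsilon>" for \<epsilon>
  proof -
    obtain \<delta> where "0 < \<delta>" and \<delta>: "\<And>x t. is_solution X D x \<Longrightarrow> dist (x 0) e < \<delta> \<Longrightarrow> 0 \<le> t \<Longrightarrow>
                                     dist (x t) e < \<epsilon>"
      using lyapunov_trapping[OF \<open>0 < \<epsilon>\<close>] by metis
    then show ?thesis by blast
  qed
  obtain \<delta> where "0 < \<delta>" and \<delta>: "\<And>x t. is_solution X D x \<Longrightarrow> dist (x 0) e < \<delta> \<Longrightarrow> 0 \<le> t \<Longrightarrow>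
                                   W (x t) \<le> W (x 0) * exp (- \<kappa> * t)"
    using lyapunov_trapping[OF \<open>0 < \<rho>\<close>] by metis
  have "filterlim (\<lambda>t. - \<kappa> * t) at_bot at_top"
    using W_decay(1) by (intro filterlim_tendsto_neg_mult_at_bot[OF tendsto_const] filterlim_ident) auto
  then have exp_decay: "((\<lambda>t. c * exp (- \<kappa> * t)) \<longlongrightarrow> 0) at_top" for c
    using tendsto_mult_right_zero filterlim_compose[OF exp_at_bot] by blast
  show "\<exists>\<delta>>0. \<forall>x. is_solution X D x \<and> dist (x 0) e < \<delta> \<longrightarrow> (x \<longlongrightarrow> e) at_top"
  proof (intro exI[of _ \<delta>] conjI allI impI \<open>0 < \<delta>\<close> tendstoI)
    fix x and \<epsilon> :: real
    assume x: "is_solution X D x \<and> dist (x 0) e < \<delta>" and "0 < \<epsilon>"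
    then obtain \<eta>\<epsilon> where "0 < \<eta>\<epsilon>" and \<eta>\<epsilon>: "\<And>z. z \<in> D \<Longrightarrow> W z < \<eta>\<epsilon> \<Longrightarrow> dist z e < \<epsilon>"
      using W_small by blast
    have "\<forall>\<^sub>F t in at_top. W (x 0) * exp (- \<kappa> * t) < \<eta>\<epsilon>"
      using order_tendstoD(2)[OF exp_decay \<open>0 < \<eta>\<epsilon>\<close>] .
    then show "\<forall>\<^sub>F t in at_top. dist (x t) e < \<epsilon>"
      using eventually_ge_at_top[of 0]
    proof eventually_elim
      case (elim t)
      with x \<delta>[of x t] have "x t \<in> D" "W (x t) < \<eta>\<epsilon>"
        by (auto simp: is_solution_def)
      then show ?case by (rule \<eta>\<epsilon>)
    qed
  qed
qed

end

end

section \<open>Coordinates, truncation and incidence functions\<close>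

lemma abs_le_norm4:
  fixes a b c d :: real
  shows "\<bar>a\<bar> \<le> norm (a, b, c, d)" "\<bar>b\<bar> \<le> norm (a, b, c, d)"
    and "\<bar>c\<bar> \<le> norm (a, b, c, d)" "\<bar>d\<bar> \<le> norm (a, b, c, d)"
  using norm_fst_le[of a "(b, c, d)"] norm_snd_le[of "(b, c, d)" a]
    norm_fst_le[of b "(c, d)"] norm_snd_le[of "(c, d)" b] norm_fst_le[of c d] norm_snd_le[of d c]
  by (auto intro: order_trans)

lemma norm4_le_sum_abs:
  fixes a b c d :: real
  shows "norm (a, b, c, d) \<le> \<bar>a\<bar> + \<bar>b\<bar> + \<bar>c\<bar> + \<bar>d\<bar>"
  using norm_Pair_le[of a "(b, c, d)"] norm_Pair_le[of b "(c, d)"] norm_Pair_le[of c d] by simp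

lemma isCont_imp_less_near:
  fixes g :: "'a::metric_space \<Rightarrow> real"
  assumes "isCont g a" "g a < b"
  shows "\<exists>\<rho>>0. \<forall>z. dist z a < \<rho> \<longrightarrow> g z < b"
  using assms(1)[unfolded continuous_at_eps_delta, rule_format, of "b - g a"] assms(2)
  by (auto simp: dist_real_def abs_less_iff)

lemma isCont_imp_greater_near:
  fixes g :: "'a::metric_space \<Rightarrow> real"
  assumes "isCont g a" "b < g a"
  shows "\<exists>\<rho>>0. \<forall>z. dist z a < \<rho> \<longrightarrow> b < g z"
  using isCont_imp_less_near[where g = "\<lambda>z. - g z" and a = a and b = "- b"] assms by simp

lemma lipschitz_on_mult_bounded:
  fixes f g :: "'a::metric_space \<Rightarrow> real"
  assumes "Lf-lipschitz_on U f" "Lg-lipschitz_on U g" "0 \<le> B"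
    and "\<And>x. x \<in> U \<Longrightarrow> \<bar>f x\<bar> \<le> B" "\<And>x. x \<in> U \<Longrightarrow> \<bar>g x\<bar> \<le> B"
  shows "(B * (Lf + Lg))-lipschitz_on U (\<lambda>x. f x * g x)"
proof (rule lipschitz_onI)
  fix x y assume "x \<in> U" "y \<in> U"
  have "\<bar>f x * g x - f y * g y\<bar> \<le> \<bar>f x\<bar> * \<bar>g x - g y\<bar> + \<bar>g y\<bar> * \<bar>f x - f y\<bar>"
  proof -
    have "f x * g x - f y * g y = f x * (g x - g y) + g y * (f x - f y)"
      by (simp add: algebra_simps)
    then show ?thesis
      by (metis abs_mult abs_triangle_ineq)
  qed
  also have "\<dots> \<le> B * (Lg * dist x y) + B * (Lf * dist x y)"
    using assms \<open>x \<in> U\<close> \<open>y \<in> U\<close> lipschitz_onD[of Lf U f x y] lipschitz_onD[of Lg U g x y]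
    by (intro add_mono mult_mono) (auto simp: dist_real_def)
  finally show "dist (f x * g x) (f y * g y) \<le> B * (Lf + Lg) * dist x y"
    by (simp add: dist_real_def algebra_simps)
qed (use assms(3) lipschitz_on_nonneg[OF assms(1)] lipschitz_on_nonneg[OF assms(2)] in simp)

lemma bounded_linear_coordinates4:
  "bounded_linear (fst :: real \<times> real \<times> real \<times> real \<Rightarrow> real)"
  "bounded_linear (\<lambda>z :: real \<times> real \<times> real \<times> real. fst (snd z))"
  "bounded_linear (\<lambda>z :: real \<times> real \<times> real \<times> real. fst (snd (snd z)))"
  "bounded_linear (\<lambda>z :: real \<times> real \<times> real \<times> real. snd (snd (snd z)))"
  by (intro bounded_linear_fst bounded_linear_compose[OF bounded_linear_fst]
      bounded_linear_compose[OF bounded_linear_snd] bounded_linear_snd)+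

definition total_population :: "real \<times> real \<times> real \<times> real \<Rightarrow> real" where
  "total_population z = fst z + fst (snd z) + fst (snd (snd z)) + snd (snd (snd z))"

lemma bounded_linear_total_population: "bounded_linear total_population"
  unfolding total_population_def[abs_def] by (intro bounded_linear_add bounded_linear_coordinates4)

lemma lipschitz_on_coordinates4:
  fixes U :: "(real \<times> real \<times> real \<times> real) set"
  shows "1-lipschitz_on U fst" "1-lipschitz_on U (\<lambda>z. fst (snd z))"
    and "1-lipschitz_on U (\<lambda>z. fst (snd (snd z)))" "1-lipschitz_on U (\<lambda>z. snd (snd (snd z)))"
proof -
  have "dist (fst z) (fst w) \<le> dist z w" "dist (fst (snd z)) (fst (snd w)) \<le> dist z w"
    "dist (fst (snd (snd z))) (fst (snd (snd w))) \<le> dist z w"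
    "dist (snd (snd (snd z))) (snd (snd (snd w))) \<le> dist z w" for z w :: "real \<times> real \<times> real \<times> real"
    by (meson dist_fst_le dist_snd_le order_trans)+
  then show "1-lipschitz_on U fst" "1-lipschitz_on U (\<lambda>z. fst (snd z))"
    "1-lipschitz_on U (\<lambda>z. fst (snd (snd z)))" "1-lipschitz_on U (\<lambda>z. snd (snd (snd z)))"
    by (simp_all add: lipschitz_on_def)
qed

definition clip :: "real \<Rightarrow> real \<Rightarrow> real" where
  "clip M y = max 0 (min M y)"

definition clip4 :: "real \<Rightarrow> real \<times> real \<times> real \<times> real \<Rightarrow> real \<times> real \<times> real \<times> real" where
  "clip4 M = map_prod (clip M) (map_prod (clip M) (map_prod (clip M) (clip M)))"

definition box4 :: "real \<Rightarrow> (real \<times> real \<times> real \<times> real) set" where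
  "box4 M = {0..M} \<times> {0..M} \<times> {0..M} \<times> {0..M}"

lemma clip4_Pair [simp]: "clip4 M (S, V, I1, I2) = (clip M S, clip M V, clip M I1, clip M I2)"
  by (simp add: clip4_def)

lemma dist_map_prod_le:
  assumes "\<And>a b. dist (f a) (f b) \<le> dist a b" "\<And>a b. dist (g a) (g b) \<le> dist a b"
  shows "dist (map_prod f g x) (map_prod f g y) \<le> dist x y"
proof -
  have "(dist (f (fst x)) (f (fst y)))\<^sup>2 + (dist (g (snd x)) (g (snd y)))\<^sup>2
          \<le> (dist (fst x) (fst y))\<^sup>2 + (dist (snd x) (snd y))\<^sup>2"
    using assms by (intro add_mono power_mono) auto
  then show ?thesis
    by (cases x, cases y) (simp add: dist_Pair_Pair)
qed

lemma lipschitz_on_clip4: "1-lipschitz_on UNIV (clip4 M)"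
proof (rule lipschitz_onI)
  have "dist (clip M a) (clip M b) \<le> dist a b" for a b
    by (simp add: clip_def dist_real_def max_def min_def abs_if)
  then show "dist (clip4 M z) (clip4 M w) \<le> 1 * dist z w" for z w
    unfolding clip4_def by (simp add: dist_map_prod_le)
qed simp

lemma clip4_in_box4: "0 \<le> M \<Longrightarrow> clip4 M z \<in> box4 M"
  by (cases z) (simp add: box4_def clip_def)

lemma clip4_box4: "z \<in> box4 M \<Longrightarrow> clip4 M z = z"
  by (cases z) (simp add: box4_def clip_def)

lemma clip_sum_ge:
  assumes "0 \<le> M" "M < S + V + I1 + I2"
  shows "M \<le> clip M S + clip M V + clip M I1 + clip M I2"
proof -
  have "0 \<le> clip M a" "min M a \<le> clip M a" for a
    by (simp_all add: clip_def)
  from this[of S] this[of V] this[of I1] this[of I2] assms show ?thesis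
    unfolding min_def by (smt (verit))
qed

lemma C2_on_quadrant_has_derivative:
  assumes "C2_on_quadrant F"
  obtains F' where "\<And>p. 0 \<le> fst p \<Longrightarrow> 0 \<le> snd p \<Longrightarrow>
                      ((\<lambda>p. F (fst p) (snd p)) has_derivative blinfun_apply (F' p)) (at p)"
    and "\<And>p. 0 \<le> fst p \<Longrightarrow> 0 \<le> snd p \<Longrightarrow> isCont F' p"
proof -
  obtain U F' F'' where U: "{p. 0 \<le> fst p \<and> 0 \<le> snd p} \<subseteq> U"
    and "\<And>p. p \<in> U \<Longrightarrow> ((\<lambda>p. F (fst p) (snd p)) has_derivative blinfun_apply (F' p)) (at p)
                    \<and> (F' has_derivative blinfun_apply (F'' p)) (at p)"
    using assms unfolding C2_on_quadrant_def C2_on_def by blast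
  with U have "\<And>p. 0 \<le> fst p \<Longrightarrow> 0 \<le> snd p \<Longrightarrow>
                  ((\<lambda>p. F (fst p) (snd p)) has_derivative blinfun_apply (F' p)) (at p) \<and> isCont F' p"
    using has_derivative_continuous by blast
  then show thesis using that by blast
qed

lemma C2_on_quadrant_isCont:
  assumes "C2_on_quadrant F" "0 \<le> S" "0 \<le> I"
  shows "isCont (\<lambda>p. F (fst p) (snd p)) (S, I)"
proof -
  obtain F' where "\<And>p. 0 \<le> fst p \<Longrightarrow> 0 \<le> snd p \<Longrightarrow>
                      ((\<lambda>p. F (fst p) (snd p)) has_derivative blinfun_apply (F' p)) (at p)"
    using C2_on_quadrant_has_derivative[OF assms(1)] by blast
  from this[of "(S, I)"] show ?thesis
    using assms(2,3) has_derivative_continuous by auto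
qed

lemma C2_on_quadrant_lipschitz_on_square:
  assumes "C2_on_quadrant F"
  obtains K where "K-lipschitz_on ({0..M} \<times> {0..M}) (\<lambda>p. F (fst p) (snd p))"
proof -
  let ?Q = "{0..M} \<times> {0..M::real}"
  obtain F' where F': "\<And>p. 0 \<le> fst p \<Longrightarrow> 0 \<le> snd p \<Longrightarrow>
                         ((\<lambda>p. F (fst p) (snd p)) has_derivative blinfun_apply (F' p)) (at p)"
    and cont: "\<And>p. 0 \<le> fst p \<Longrightarrow> 0 \<le> snd p \<Longrightarrow> isCont F' p"
    using C2_on_quadrant_has_derivative[OF assms] by blast
  have "compact (F' ` ?Q)"
    using cont by (intro compact_continuous_image continuous_at_imp_continuous_on compact_Times) auto
  then obtain K where K: "\<And>p. p \<in> ?Q \<Longrightarrow> norm (F' p) \<le> K"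
    by (meson bounded_iff compact_imp_bounded imageI)
  have "(max K 0)-lipschitz_on ?Q (\<lambda>p. F (fst p) (snd p))"
  proof (rule bounded_derivative_imp_lipschitz)
    show "((\<lambda>p. F (fst p) (snd p)) has_derivative blinfun_apply (F' p)) (at p within ?Q)"
      if "p \<in> ?Q" for p
      using F' that by (auto intro: has_derivative_at_withinI)
    show "onorm (blinfun_apply (F' p)) \<le> max K 0" if "p \<in> ?Q" for p
      using K[OF that] by (simp add: norm_blinfun.rep_eq[symmetric])
  qed (auto intro: convex_Times)
  then show thesis ..
qed

lemma incidence_okD:
  assumes "incidence_ok F f"
  shows "C2_on_quadrant F" "C2_on_quadrant f"
    and "0 \<le> S \<Longrightarrow> 0 \<le> I \<Longrightarrow> F S I = I * f S I" "0 \<le> S \<Longrightarrow> 0 \<le> I \<Longrightarrow> 0 \<le> f S I"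
    and "0 \<le> I \<Longrightarrow> F 0 I = 0" "0 \<le> S \<Longrightarrow> F S 0 = 0"
  using assms unfolding incidence_ok_def by (elim conjE; blast)+

lemma incidence_ok_deriv_at_0:
  assumes "incidence_ok F f" "0 \<le> S"
  shows "deriv (\<lambda>I. F S I) 0 = f S 0"
proof -
  note incidence = incidence_okD[OF assms(1)]
  have "F S 0 = 0" and factor: "\<And>I. 0 \<le> I \<Longrightarrow> F S I = I * f S I"
    using incidence(3,6) \<open>0 \<le> S\<close> by simp_all
  obtain F' where "\<And>p. 0 \<le> fst p \<Longrightarrow> 0 \<le> snd p \<Longrightarrow>
                      ((\<lambda>p. F (fst p) (snd p)) has_derivative blinfun_apply (F' p)) (at p)"
    using C2_on_quadrant_has_derivative[OF incidence(1)] by blast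
  then have F': "((\<lambda>p. F (fst p) (snd p)) has_derivative blinfun_apply (F' (S, 0))) (at (S, 0))"
    using \<open>0 \<le> S\<close> by simp
  have "((\<lambda>I. (S, I)) has_derivative (\<lambda>h. (0, h))) (at 0)"
    by (intro derivative_eq_intros) auto
  from has_derivative_compose[OF this F'] have "(\<lambda>I. F S I) differentiable (at 0)"
    by (auto intro: differentiableI)
  then have "((\<lambda>h. (F S h - F S 0) / (h - 0)) \<longlongrightarrow> deriv (\<lambda>I. F S I) 0) (at 0)"
    by (simp add: DERIV_deriv_iff_real_differentiable[symmetric] has_field_derivative_iff)
  then have quotient: "((\<lambda>h. (F S h - F S 0) / (h - 0)) \<longlongrightarrow> deriv (\<lambda>I. F S I) 0) (at_right 0)"
    by (rule tendsto_within_subset) auto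
  have "((\<lambda>h. (S, h)) \<longlongrightarrow> (S, 0)) (at_right (0::real))"
    by (intro tendsto_intros)
  with C2_on_quadrant_isCont[OF incidence(2) \<open>0 \<le> S\<close> order_refl]
  have "((\<lambda>h. f S h) \<longlongrightarrow> f S 0) (at_right 0)"
    using isCont_tendsto_compose by fastforce
  moreover have "\<forall>\<^sub>F h in at_right 0. f S h = (F S h - F S 0) / (h - 0)"
    using eventually_at_right_less[of "0::real"] by eventually_elim (simp add: factor \<open>F S 0 = 0\<close>)
  ultimately have "((\<lambda>h. (F S h - F S 0) / (h - 0)) \<longlongrightarrow> f S 0) (at_right 0)"
    by (rule Lim_transform_eventually)
  with quotient show ?thesis
    using tendsto_unique trivial_limit_at_right_real by blast
qed

section \<open>The vaccination model\<close>

lemma neg_mult_le_bound: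
  fixes x y \<rho> b :: real
  assumes "\<bar>x\<bar> \<le> \<rho>" "0 \<le> y" "y \<le> b"
  shows "- (x * y) \<le> \<rho> * b"
proof -
  have "- (x * y) \<le> \<bar>x\<bar> * y"
    by (metis abs_ge_minus_self minus_mult_left mult_right_mono assms(2))
  also have "\<dots> \<le> \<rho> * b"
    using assms by (intro mult_mono) auto
  finally show ?thesis .
qed

lemma weighted_cross_term_le:
  fixes u w lam \<mu> r A :: real
  assumes "A * r\<^sup>2 = lam * \<mu>" "0 < lam"
  shows "2 * A * r * u * w \<le> lam * u\<^sup>2 + \<mu> * (A * w\<^sup>2)"
proof -
  have "0 \<le> (lam * u - A * r * w)\<^sup>2" by simp
  also have "(lam * u - A * r * w)\<^sup>2 = lam * (lam * u\<^sup>2 - 2 * A * r * u * w + \<mu> * (A * w\<^sup>2))"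
    using assms(1) by (simp add: power2_eq_square algebra_simps)
  finally show ?thesis
    using assms(2) by (simp add: zero_le_mult_iff)
qed

lemma lyapunov_derivative_estimate:
  fixes u w I1 I2 g1 g2 kV lam \<mu> r A \<rho> c \<alpha>1 \<alpha>2 :: real
  assumes A: "A * r\<^sup>2 = lam * \<mu>" "0 < lam" "0 < A" "0 < c"
    and small: "\<bar>u\<bar> \<le> \<rho>" "\<bar>w\<bar> \<le> \<rho>" "4 * \<rho> * (1 + A) * (\<alpha>1 + \<alpha>2) \<le> c"
    and nonneg: "0 \<le> I1" "0 \<le> I2" "0 \<le> g1" "0 \<le> g2" "0 \<le> kV"
    and rates: "g1 \<le> \<alpha>1 - c" "g2 + kV \<le> \<alpha>2 - c"
  shows "2 * u * (- lam * u - I1 * g1 - I2 * g2) + 2 * A * w * (r * u - \<mu> * w - I2 * kV)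
           + I1 * (g1 - \<alpha>1) + I2 * (g2 + kV - \<alpha>2)
         \<le> - min lam (min \<mu> (c / 2)) * (u\<^sup>2 + A * w\<^sup>2 + I1 + I2)"
proof -
  have "0 \<le> \<rho>" "0 \<le> \<alpha>1" "0 \<le> \<alpha>2"
    using small nonneg rates A by linarith+
  note cross = weighted_cross_term_le[OF A(1,2), of u w]
  have t1: "- (u * (I1 * g1)) \<le> \<rho> * (I1 * \<alpha>1)"
    using nonneg rates A small by (intro neg_mult_le_bound mult_left_mono) auto
  have t2: "- (u * (I2 * g2)) \<le> \<rho> * (I2 * \<alpha>2)"
    using nonneg rates A small by (intro neg_mult_le_bound mult_left_mono) auto
  have "- (w * (I2 * kV)) \<le> \<rho> * (I2 * \<alpha>2)"
    using nonneg rates A small by (intro neg_mult_le_bound mult_left_mono) auto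
  then have t3: "A * - (w * (I2 * kV)) \<le> A * (\<rho> * (I2 * \<alpha>2))"
    using A(3) by (rule mult_left_mono[OF _ less_imp_le])
  have "\<rho> * \<alpha>1 \<le> \<rho> * ((1 + A) * (\<alpha>1 + \<alpha>2))" "\<rho> * ((1 + A) * \<alpha>2) \<le> \<rho> * ((1 + A) * (\<alpha>1 + \<alpha>2))"
    using \<open>0 \<le> \<rho>\<close> \<open>0 \<le> \<alpha>1\<close> \<open>0 \<le> \<alpha>2\<close> A(3) by (intro mult_left_mono; simp add: algebra_simps)+
  then have "2 * \<rho> * \<alpha>1 \<le> c / 2" "2 * \<rho> * ((1 + A) * \<alpha>2) \<le> c / 2"
    using small(3) by (simp_all add: algebra_simps)
  note bounds = mult_right_mono[OF this(1) nonneg(1)] mult_right_mono[OF this(2) nonneg(2)]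
  have t4: "2 * (\<rho> * (I1 * \<alpha>1)) \<le> c / 2 * I1"
    using bounds(1) by (simp add: mult_ac)
  have t5: "2 * (\<rho> * (I2 * \<alpha>2)) + 2 * (A * (\<rho> * (I2 * \<alpha>2))) \<le> c / 2 * I2"
    using bounds(2) by (simp add: algebra_simps)
  have "I1 * (g1 - \<alpha>1) \<le> I1 * - c" "I2 * (g2 + kV - \<alpha>2) \<le> I2 * - c"
    using nonneg rates by (intro mult_left_mono; simp)+
  then have t6: "I1 * (g1 - \<alpha>1) \<le> - c * I1" "I2 * (g2 + kV - \<alpha>2) \<le> - c * I2"
    by (simp_all add: mult.commute)
  let ?\<kappa> = "min lam (min \<mu> (c / 2))"
  have "?\<kappa> * u\<^sup>2 \<le> lam * u\<^sup>2" "?\<kappa> * (A * w\<^sup>2) \<le> \<mu> * (A * w\<^sup>2)"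
    "?\<kappa> * I1 \<le> c / 2 * I1" "?\<kappa> * I2 \<le> c / 2 * I2"
    using A nonneg by (intro mult_right_mono; simp)+
  moreover have "2 * u * (- lam * u - I1 * g1 - I2 * g2) + 2 * A * w * (r * u - \<mu> * w - I2 * kV)
           + I1 * (g1 - \<alpha>1) + I2 * (g2 + kV - \<alpha>2)
         = - 2 * (lam * u\<^sup>2) + 2 * A * r * u * w - 2 * (\<mu> * (A * w\<^sup>2)) + 2 * - (u * (I1 * g1))
           + 2 * - (u * (I2 * g2)) + 2 * (A * - (w * (I2 * kV))) + I1 * (g1 - \<alpha>1) + I2 * (g2 + kV - \<alpha>2)"
    by (simp add: algebra_simps power2_eq_square)
  moreover have "- ?\<kappa> * (u\<^sup>2 + A * w\<^sup>2 + I1 + I2)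
                   = - (?\<kappa> * u\<^sup>2) - ?\<kappa> * (A * w\<^sup>2) - ?\<kappa> * I1 - ?\<kappa> * I2"
    by (simp add: algebra_simps)
  ultimately show ?thesis
    using cross t1 t2 t3 t4 t5 t6 by linarith
qed

locale vaccination_model =
  fixes \<Lambda> \<mu> r k \<gamma>1 \<gamma>2 v1 v2 :: real
    and F1 f1 F2 f2 :: "real \<Rightarrow> real \<Rightarrow> real"
  assumes pos: "\<Lambda> > 0" "\<mu> > 0" "r > 0" "k > 0" "\<gamma>1 > 0" "\<gamma>2 > 0" "v1 \<ge> 0" "v2 \<ge> 0"
    and incidence: "incidence_ok F1 f1" "incidence_ok F2 f2"
begin

abbreviation "lam \<equiv> r + \<mu>"
abbreviation "\<alpha>1 \<equiv> \<gamma>1 + v1 + \<mu>"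
abbreviation "\<alpha>2 \<equiv> \<gamma>2 + v2 + \<mu>"
abbreviation "S0 \<equiv> \<Lambda> / lam"
abbreviation "V0 \<equiv> r * \<Lambda> / (\<mu> * lam)"
abbreviation "E0 \<equiv> (S0, V0, 0::real, 0::real)"
abbreviation "X \<equiv> model_rhs \<Lambda> \<mu> r k \<gamma>1 \<gamma>2 v1 v2 F1 F2"

lemma model_rhs_components:
  "X z = (\<Lambda> - F1 (fst z) (fst (snd (snd z))) - F2 (fst z) (snd (snd (snd z))) - lam * fst z,
          r * fst z - \<mu> * fst (snd z) - k * (snd (snd (snd z)) * fst (snd z)),
          F1 (fst z) (fst (snd (snd z))) - \<alpha>1 * fst (snd (snd z)),
          F2 (fst z) (snd (snd (snd z))) + k * (snd (snd (snd z)) * fst (snd z)) - \<alpha>2 * snd (snd (snd z)))"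
  by (cases z) (simp add: model_rhs_def algebra_simps)

lemma model_rhs_lipschitz_on_box4:
  assumes "0 \<le> M"
  obtains L where "L-lipschitz_on (box4 M) X"
proof -
  let ?B = "box4 M"
  have into_square: "(\<lambda>z. (fst z, p z)) ` ?B \<subseteq> {0..M} \<times> {0..M}"
    if "p = (\<lambda>z. fst (snd (snd z))) \<or> p = (\<lambda>z. snd (snd (snd z)))" for p
    using that by (auto simp: box4_def)
  have F_lip: "\<exists>L. L-lipschitz_on ?B (\<lambda>z. F (fst z) (p z))"
    if F: "C2_on_quadrant F" and p: "p = (\<lambda>z. fst (snd (snd z))) \<or> p = (\<lambda>z. snd (snd (snd z)))"
    for F p
  proof -
    obtain K where "K-lipschitz_on ({0..M} \<times> {0..M}) (\<lambda>q. F (fst q) (snd q))"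
      using C2_on_quadrant_lipschitz_on_square[OF F] by blast
    then have F_lip: "K-lipschitz_on ((\<lambda>z. (fst z, p z)) ` ?B) (\<lambda>q. F (fst q) (snd q))"
      using into_square[OF p] by (rule lipschitz_on_subset)
    have "(sqrt (1\<^sup>2 + 1\<^sup>2))-lipschitz_on ?B (\<lambda>z. (fst z, p z))"
      using p lipschitz_on_Pair[OF lipschitz_on_coordinates4(1) lipschitz_on_coordinates4(3)]
        lipschitz_on_Pair[OF lipschitz_on_coordinates4(1) lipschitz_on_coordinates4(4)] by blast
    from lipschitz_on_compose2[OF this F_lip] show ?thesis
      by auto
  qed
  obtain L1 L2 where L1: "L1-lipschitz_on ?B (\<lambda>z. F1 (fst z) (fst (snd (snd z))))"
    and L2: "L2-lipschitz_on ?B (\<lambda>z. F2 (fst z) (snd (snd (snd z))))"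
    using F_lip[OF incidence_okD(1)[OF incidence(1)]] F_lip[OF incidence_okD(1)[OF incidence(2)]] by blast
  have bounded: "\<bar>fst (snd z)\<bar> \<le> M" "\<bar>snd (snd (snd z))\<bar> \<le> M" if "z \<in> ?B" for z
    using that by (auto simp: box4_def)
  have product: "(M * (1 + 1))-lipschitz_on ?B (\<lambda>z. snd (snd (snd z)) * fst (snd z))"
    by (rule lipschitz_on_mult_bounded[OF lipschitz_on_coordinates4(4,2) assms]) (use bounded in auto)
  note lipschitz = L1 L2 product lipschitz_on_coordinates4
  have "\<exists>L. L-lipschitz_on ?B X"
    unfolding model_rhs_components
    by (rule exI, (rule lipschitz_on_Pair lipschitz_on_diff lipschitz_on_add lipschitz_on_cmult_real
        lipschitz_on_constant lipschitz)+)
  then show thesis using that by blast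
qed

lemma truncated_field_inward:
  assumes "0 \<le> M"
  shows "fst z < 0 \<Longrightarrow> 0 \<le> fst (X (clip4 M z))"
    and "fst (snd z) < 0 \<Longrightarrow> 0 \<le> fst (snd (X (clip4 M z)))"
    and "fst (snd (snd z)) < 0 \<Longrightarrow> 0 \<le> fst (snd (snd (X (clip4 M z))))"
    and "snd (snd (snd z)) < 0 \<Longrightarrow> 0 \<le> snd (snd (snd (X (clip4 M z))))"
proof -
  have "0 \<le> clip M a" "a \<le> 0 \<Longrightarrow> clip M a = 0" for a
    using assms by (auto simp: clip_def)
  then show "fst z < 0 \<Longrightarrow> 0 \<le> fst (X (clip4 M z))"
    and "fst (snd z) < 0 \<Longrightarrow> 0 \<le> fst (snd (X (clip4 M z)))"
    and "fst (snd (snd z)) < 0 \<Longrightarrow> 0 \<le> fst (snd (snd (X (clip4 M z))))"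
    and "snd (snd (snd z)) < 0 \<Longrightarrow> 0 \<le> snd (snd (snd (X (clip4 M z))))"
    using pos incidence_okD(5,6)[OF incidence(1)] incidence_okD(5,6)[OF incidence(2)]
    by (cases z; simp add: model_rhs_def)+
qed

lemma truncated_field_total_population:
  assumes "0 \<le> M" "\<Lambda> \<le> \<mu> * M" "M < total_population z"
  shows "total_population (X (clip4 M z)) \<le> 0"
proof -
  obtain S V I1 I2 where z: "z = (S, V, I1, I2)"
    by (cases z)
  have "\<mu> * M \<le> \<mu> * (clip M S + clip M V + clip M I1 + clip M I2)"
    using clip_sum_ge[OF assms(1)] assms(3) pos(2) by (simp add: z total_population_def)
  moreover have "\<mu> * clip M I1 \<le> \<alpha>1 * clip M I1" "\<mu> * clip M I2 \<le> \<alpha>2 * clip M I2"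
    using assms(1) pos by (simp_all add: mult_right_mono clip_def)
  ultimately show ?thesis
    using assms(2) by (simp add: z total_population_def model_rhs_def algebra_simps)
qed

lemma truncated_solution_in_box4:
  assumes y: "is_solution (\<lambda>z. X (clip4 M z)) UNIV y" and "y 0 \<in> orthant4"
    and "total_population (y 0) \<le> M" "\<Lambda> \<le> \<mu> * M" "0 \<le> t"
  shows "y t \<in> box4 M"
proof -
  have "0 < \<mu> * M" using \<open>\<Lambda> \<le> \<mu> * M\<close> pos(1) by linarith
  then have "0 \<le> M" using pos(2) by (simp add: zero_less_mult_iff)
  have nonneg: "0 \<le> p (y t)"
    if "bounded_linear p" "0 \<le> p (y 0)" "\<And>z. p z < 0 \<Longrightarrow> 0 \<le> p (X (clip4 M z))"
    for p :: "real \<times> real \<times> real \<times> real \<Rightarrow> real"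
    using solution_linear_upper_bound[OF y, of "\<lambda>z. - p z" 0 t] that \<open>0 \<le> t\<close>
    by (simp add: bounded_linear_minus)
  have y0: "0 \<le> fst (y 0)" "0 \<le> fst (snd (y 0))" "0 \<le> fst (snd (snd (y 0)))" "0 \<le> snd (snd (snd (y 0)))"
    using \<open>y 0 \<in> orthant4\<close> by (auto simp: orthant4_def)
  have "0 \<le> fst (y t)" "0 \<le> fst (snd (y t))" "0 \<le> fst (snd (snd (y t)))" "0 \<le> snd (snd (snd (y t)))"
    using nonneg[OF bounded_linear_coordinates4(1) y0(1) truncated_field_inward(1)[OF \<open>0 \<le> M\<close>]]
      nonneg[OF bounded_linear_coordinates4(2) y0(2) truncated_field_inward(2)[OF \<open>0 \<le> M\<close>]]
      nonneg[OF bounded_linear_coordinates4(3) y0(3) truncated_field_inward(3)[OF \<open>0 \<le> M\<close>]]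
      nonneg[OF bounded_linear_coordinates4(4) y0(4) truncated_field_inward(4)[OF \<open>0 \<le> M\<close>]]
    by simp_all
  moreover have "total_population (y t) \<le> M"
    using solution_linear_upper_bound[OF y bounded_linear_total_population] assms(3-5)
      truncated_field_total_population[OF \<open>0 \<le> M\<close> \<open>\<Lambda> \<le> \<mu> * M\<close>] by blast
  ultimately show ?thesis
    by (cases "y t") (simp add: box4_def total_population_def)
qed

lemma solution_exists:
  assumes "z0 \<in> orthant4"
  obtains x where "is_solution X orthant4 x" "x 0 = z0"
proof -
  define M where "M = total_population z0 + \<Lambda> / \<mu>"
  have "0 \<le> total_population z0"
    using assms by (auto simp: orthant4_def total_population_def)
  moreover have "\<mu> * M = \<mu> * total_population z0 + \<Lambda>"
    using pos by (simp add: M_def field_simps)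
  ultimately have "0 \<le> M" "\<Lambda> \<le> \<mu> * M"
    using pos by (simp_all add: M_def)
  obtain L where "L-lipschitz_on (box4 M) X"
    using model_rhs_lipschitz_on_box4[OF \<open>0 \<le> M\<close>] by blast
  then have "L-lipschitz_on (clip4 M ` UNIV) X"
    by (rule lipschitz_on_subset) (use clip4_in_box4[OF \<open>0 \<le> M\<close>] in auto)
  from lipschitz_on_compose2[OF lipschitz_on_clip4 this]
  obtain y where "y 0 = z0" and y': "\<And>t. 0 \<le> t \<Longrightarrow> (y has_vector_derivative X (clip4 M (y t))) (at t within {0..})"
    using lipschitz_ode_solution_exists by blast
  then have y: "is_solution (\<lambda>z. X (clip4 M z)) UNIV y"
    by (simp add: is_solution_def)
  have box: "y t \<in> box4 M" if "0 \<le> t" for t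
    using truncated_solution_in_box4[OF y] assms \<open>y 0 = z0\<close> \<open>\<Lambda> \<le> \<mu> * M\<close> that pos
    by (simp add: M_def)
  have "is_solution X orthant4 y"
    unfolding is_solution_def
  proof (intro allI impI conjI)
    fix t :: real assume "0 \<le> t"
    then show "y t \<in> orthant4"
      using box[OF \<open>0 \<le> t\<close>] by (cases "y t") (simp add: box4_def orthant4_def)
    show "(y has_vector_derivative X (y t)) (at t within {0..})"
      using y'[OF \<open>0 \<le> t\<close>] clip4_box4[OF box[OF \<open>0 \<le> t\<close>]] by simp
  qed
  then show thesis using that \<open>y 0 = z0\<close> by blast
qed

lemma model_rhs_infected_classes:
  assumes "z \<in> orthant4"
  shows "fst (snd (snd (X z))) = fst (snd (snd z)) * (f1 (fst z) (fst (snd (snd z))) - \<alpha>1)"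
    and "snd (snd (snd (X z))) = snd (snd (snd z)) * (f2 (fst z) (snd (snd (snd z))) + k * fst (snd z) - \<alpha>2)"
  using assms incidence_okD(3)[OF incidence(1)] incidence_okD(3)[OF incidence(2)]
  by (auto simp: orthant4_def model_rhs_def algebra_simps)

lemma isCont_infected_growth_rates:
  shows "isCont (\<lambda>z. f1 (fst z) (fst (snd (snd z)))) E0"
    and "isCont (\<lambda>z. f2 (fst z) (snd (snd (snd z))) + k * fst (snd z)) E0"
proof -
  have "0 \<le> S0" using pos by simp
  note f_cont = C2_on_quadrant_isCont[OF _ this order_refl]
  have "isCont (\<lambda>p. f1 (fst p) (snd p)) ((\<lambda>z. (fst z, fst (snd (snd z)))) E0)"
    "isCont (\<lambda>p. f2 (fst p) (snd p)) ((\<lambda>z. (fst z, snd (snd (snd z)))) E0)"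
    using f_cont[OF incidence_okD(2)[OF incidence(1)]] f_cont[OF incidence_okD(2)[OF incidence(2)]]
    by simp_all
  from isCont_o2[where f = "\<lambda>z. (fst z, fst (snd (snd z)))", OF _ this(1)]
    isCont_o2[where f = "\<lambda>z. (fst z, snd (snd (snd z)))", OF _ this(2)]
  show "isCont (\<lambda>z. f1 (fst z) (fst (snd (snd z)))) E0"
    "isCont (\<lambda>z. f2 (fst z) (snd (snd (snd z))) + k * fst (snd z)) E0"
    by (auto intro!: continuous_intros)
qed

lemma unstable_if_infected_class_grows:
  fixes p g :: "real \<times> real \<times> real \<times> real \<Rightarrow> real"
  assumes p: "bounded_linear p" "\<And>z. \<bar>p z\<bar> \<le> norm z" "p E0 = 0" "\<And>z. z \<in> orthant4 \<Longrightarrow> 0 \<le> p z"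
    and seeds: "\<And>\<delta>. 0 < \<delta> \<Longrightarrow> \<exists>z\<in>orthant4. dist z E0 < \<delta> \<and> 0 < p z"
    and rate: "\<And>z. z \<in> orthant4 \<Longrightarrow> p (X z) = p z * (g z - \<alpha>)" "isCont g E0" "\<alpha> < g E0"
  shows "unstable X orthant4 E0"
proof -
  define c where "c = (g E0 - \<alpha>) / 2"
  have "0 < c" "\<alpha> + c < g E0" using rate(3) by (simp_all add: c_def field_simps)
  then obtain \<rho> where "0 < \<rho>" and \<rho>: "\<And>z. dist z E0 < \<rho> \<Longrightarrow> \<alpha> + c < g z"
    using isCont_imp_greater_near[OF rate(2)] by blast
  show ?thesis
  proof (rule unstable_if_expanding_coordinate[OF _ p(1-3) \<open>0 < \<rho>\<close> \<open>0 < c\<close> _ seeds])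
    show "\<exists>x. is_solution X orthant4 x \<and> x 0 = z" if "z \<in> orthant4" for z
      using solution_exists[OF that] by blast
    show "c * p z \<le> p (X z)" if "z \<in> orthant4" "dist z E0 < \<rho>" for z
      using mult_left_mono[of c "g z - \<alpha>" "p z"] \<rho>[OF that(2)] p(4)[OF that(1)] rate(1)[OF that(1)]
      by (simp add: mult.commute)
  qed
qed

lemma dist_E0_perturbation:
  assumes "0 < \<delta>"
  shows "dist (S0, V0, \<delta> / 2, 0) E0 < \<delta>" "dist (S0, V0, 0, \<delta> / 2) E0 < \<delta>"
  using assms by (simp_all add: dist_norm norm_Pair)

lemma unstable_if_I1_invades:
  assumes "\<alpha>1 < f1 S0 0"
  shows "unstable X orthant4 E0"
proof (rule unstable_if_infected_class_grows[where p = "\<lambda>z. fst (snd (snd z))"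
      and g = "\<lambda>z. f1 (fst z) (fst (snd (snd z)))" and \<alpha> = \<alpha>1])
  show "\<exists>z\<in>orthant4. dist z E0 < \<delta> \<and> 0 < fst (snd (snd z))" if "0 < \<delta>" for \<delta>
    using dist_E0_perturbation[OF that] that pos by (intro bexI[of _ "(S0, V0, \<delta> / 2, 0)"]) (auto simp: orthant4_def)
  show "\<bar>fst (snd (snd z))\<bar> \<le> norm z" for z :: "real \<times> real \<times> real \<times> real"
    using abs_le_norm4 by (cases z) auto
qed (use assms model_rhs_infected_classes(1) isCont_infected_growth_rates(1) bounded_linear_coordinates4(3) in
    \<open>auto simp: orthant4_def\<close>)

lemma unstable_if_I2_invades:
  assumes "\<alpha>2 < f2 S0 0 + k * V0"
  shows "unstable X orthant4 E0"
proof (rule unstable_if_infected_class_grows[where p = "\<lambda>z. snd (snd (snd z))"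
      and g = "\<lambda>z. f2 (fst z) (snd (snd (snd z))) + k * fst (snd z)" and \<alpha> = \<alpha>2])
  show "\<exists>z\<in>orthant4. dist z E0 < \<delta> \<and> 0 < snd (snd (snd z))" if "0 < \<delta>" for \<delta>
    using dist_E0_perturbation[OF that] that pos by (intro bexI[of _ "(S0, V0, 0, \<delta> / 2)"]) (auto simp: orthant4_def)
  show "\<bar>snd (snd (snd z))\<bar> \<le> norm z" for z :: "real \<times> real \<times> real \<times> real"
    using abs_le_norm4 by (cases z) auto
qed (use assms model_rhs_infected_classes(2) isCont_infected_growth_rates(2) bounded_linear_coordinates4(4) in
    \<open>auto simp: orthant4_def\<close>)

definition lyapunov_weight :: real where
  "lyapunov_weight = lam * \<mu> / r\<^sup>2"

lemma lyapunov_weight: "0 < lyapunov_weight" "lyapunov_weight * r\<^sup>2 = lam * \<mu>"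
  using pos by (simp_all add: lyapunov_weight_def)

definition lyapunov :: "real \<times> real \<times> real \<times> real \<Rightarrow> real" where
  "lyapunov z = (fst z - S0)\<^sup>2 + lyapunov_weight * (fst (snd z) - V0)\<^sup>2 + fst (snd (snd z)) + snd (snd (snd z))"

definition lyapunov_deriv :: "real \<times> real \<times> real \<times> real \<Rightarrow> real \<times> real \<times> real \<times> real \<Rightarrow> real" where
  "lyapunov_deriv z h = 2 * (fst z - S0) * fst h + lyapunov_weight * (2 * (fst (snd z) - V0) * fst (snd h))
                          + fst (snd (snd h)) + snd (snd (snd h))"

lemma lyapunov_has_derivative: "(lyapunov has_derivative lyapunov_deriv z) (at z)"
  unfolding lyapunov_def[abs_def] lyapunov_deriv_def[abs_def]
  by (auto intro!: derivative_eq_intros simp: algebra_simps)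

lemma lyapunov_nonneg: "z \<in> orthant4 \<Longrightarrow> 0 \<le> lyapunov z"
  using lyapunov_weight(1) by (auto simp: lyapunov_def orthant4_def)

lemma lyapunov_E0: "lyapunov E0 = 0"
  by (simp add: lyapunov_def)


lemma lyapunov_small_imp_close:
  assumes "0 < \<epsilon>"
  shows "\<exists>\<eta>>0. \<forall>z\<in>orthant4. lyapunov z < \<eta> \<longrightarrow> dist z E0 < \<epsilon>"
proof -
  let ?A = lyapunov_weight
  define \<eta> where "\<eta> = min (min ((\<epsilon> / 4)\<^sup>2) (?A * (\<epsilon> / 4)\<^sup>2)) (\<epsilon> / 4)"
  have "0 < \<eta>" using assms lyapunov_weight by (simp add: \<eta>_def)
  have \<eta>: "\<eta> \<le> (\<epsilon> / 4)\<^sup>2" "\<eta> \<le> ?A * (\<epsilon> / 4)\<^sup>2" "\<eta> \<le> \<epsilon> / 4"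
    by (simp_all add: \<eta>_def)
  have "dist z E0 < \<epsilon>" if "z \<in> orthant4" "lyapunov z < \<eta>" for z
  proof -
    obtain S V I1 I2 where z: "z = (S, V, I1, I2)" by (cases z)
    have I: "0 \<le> I1" "0 \<le> I2" using that(1) by (simp_all add: z orthant4_def)
    have sq: "0 \<le> (S - S0)\<^sup>2" "0 \<le> ?A * (V - V0)\<^sup>2" using lyapunov_weight by simp_all
    have W: "(S - S0)\<^sup>2 + ?A * (V - V0)\<^sup>2 + I1 + I2 < \<eta>" using that(2) by (simp add: z lyapunov_def)
    have "(S - S0)\<^sup>2 < (\<epsilon> / 4)\<^sup>2" using W sq I \<eta> by linarith
    then have "\<bar>S - S0\<bar>\<^sup>2 < (\<epsilon> / 4)\<^sup>2" by simp
    then have S: "\<bar>S - S0\<bar> < \<epsilon> / 4" by (rule power2_less_imp_less) (use assms in simp)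
    have "?A * (V - V0)\<^sup>2 < ?A * (\<epsilon> / 4)\<^sup>2" using W sq I \<eta> by linarith
    then have "\<bar>V - V0\<bar>\<^sup>2 < (\<epsilon> / 4)\<^sup>2" using lyapunov_weight by simp
    then have V: "\<bar>V - V0\<bar> < \<epsilon> / 4" by (rule power2_less_imp_less) (use assms in simp)
    have "I1 < \<epsilon> / 4" "I2 < \<epsilon> / 4" using W sq I \<eta> by linarith+
    with S V I norm4_le_sum_abs[of "S - S0" "V - V0" I1 I2] show ?thesis
      by (simp add: z dist_norm)
  qed
  with \<open>0 < \<eta>\<close> show ?thesis by blast
qed

lemma lyapunov_deriv_along_field:
  assumes "z = (S, V, I1, I2)" "z \<in> orthant4"
  shows "lyapunov_deriv z (X z) =
           2 * (S - S0) * (- lam * (S - S0) - I1 * f1 S I1 - I2 * f2 S I2)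
           + 2 * lyapunov_weight * (V - V0) * (r * (S - S0) - \<mu> * (V - V0) - I2 * (k * V))
           + I1 * (f1 S I1 - \<alpha>1) + I2 * (f2 S I2 + k * V - \<alpha>2)"
proof -
  have factor: "F1 S I1 = I1 * f1 S I1" "F2 S I2 = I2 * f2 S I2"
    using assms incidence_okD(3)[OF incidence(1)] incidence_okD(3)[OF incidence(2)]
    by (simp_all add: orthant4_def)
  have "\<Lambda> - lam * S = - lam * (S - S0)"
    using pos by (simp add: field_simps)
  then have X_S: "fst (X z) = - lam * (S - S0) - I1 * f1 S I1 - I2 * f2 S I2"
    by (simp add: assms(1) model_rhs_def factor)
  have "\<mu> * V0 = r * S0"
    using pos by simp
  then have X_V: "fst (snd (X z)) = r * (S - S0) - \<mu> * (V - V0) - I2 * (k * V)"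
    by (simp add: assms(1) model_rhs_def algebra_simps)
  have X_I: "fst (snd (snd (X z))) = I1 * (f1 S I1 - \<alpha>1)"
    "snd (snd (snd (X z))) = I2 * (f2 S I2 + k * V - \<alpha>2)"
    by (simp_all add: assms(1) model_rhs_def factor algebra_simps)
  show ?thesis
    unfolding lyapunov_deriv_def X_S X_V X_I by (simp add: assms(1))
qed

lemma lyapunov_decreases_near_E0:
  assumes "f1 S0 0 < \<alpha>1" "f2 S0 0 + k * V0 < \<alpha>2"
  obtains \<rho> \<kappa> where "0 < \<rho>" "0 < \<kappa>"
    "\<And>z. z \<in> orthant4 \<Longrightarrow> dist z E0 < \<rho> \<Longrightarrow> lyapunov_deriv z (X z) \<le> - \<kappa> * lyapunov z"
proof -
  let ?A = lyapunov_weight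
  define c where "c = min (\<alpha>1 - f1 S0 0) (\<alpha>2 - (f2 S0 0 + k * V0)) / 2"
  have c: "0 < c" "c \<le> (\<alpha>1 - f1 S0 0) / 2" "c \<le> (\<alpha>2 - (f2 S0 0 + k * V0)) / 2"
    using assms unfolding c_def by (auto simp: min_def)
  then have "0 < c" "f1 S0 0 < \<alpha>1 - c" "f2 S0 0 + k * V0 < \<alpha>2 - c"
    by auto
  obtain \<rho>1 where "0 < \<rho>1" and \<rho>1: "\<And>z. dist z E0 < \<rho>1 \<Longrightarrow> f1 (fst z) (fst (snd (snd z))) < \<alpha>1 - c"
    using isCont_imp_less_near[OF isCont_infected_growth_rates(1)] \<open>f1 S0 0 < \<alpha>1 - c\<close> by force
  obtain \<rho>2 where "0 < \<rho>2"
    and \<rho>2: "\<And>z. dist z E0 < \<rho>2 \<Longrightarrow> f2 (fst z) (snd (snd (snd z))) + k * fst (snd z) < \<alpha>2 - c"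
    using isCont_imp_less_near[OF isCont_infected_growth_rates(2)] \<open>f2 S0 0 + k * V0 < \<alpha>2 - c\<close> by force
  define Q where "Q = 4 * (1 + ?A) * (\<alpha>1 + \<alpha>2)"
  have "0 < Q"
    using pos lyapunov_weight by (simp add: Q_def add_pos_pos)
  define \<rho> where "\<rho> = min (min \<rho>1 \<rho>2) (c / Q)"
  have "0 < \<rho>"
    using \<open>0 < \<rho>1\<close> \<open>0 < \<rho>2\<close> \<open>0 < c\<close> \<open>0 < Q\<close> by (simp add: \<rho>_def)
  have "\<rho> \<le> c / Q" by (simp add: \<rho>_def)
  then have "4 * \<rho> * (1 + ?A) * (\<alpha>1 + \<alpha>2) \<le> c"
    using \<open>0 < Q\<close> by (simp add: le_divide_eq Q_def algebra_simps)
  show thesis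
  proof (rule that[OF \<open>0 < \<rho>\<close>])
    show "0 < min lam (min \<mu> (c / 2))"
      using pos \<open>0 < c\<close> by simp
    fix z assume "z \<in> orthant4" "dist z E0 < \<rho>"
    obtain S V I1 I2 where z: "z = (S, V, I1, I2)" by (cases z)
    have "\<bar>S - S0\<bar> \<le> dist z E0" "\<bar>V - V0\<bar> \<le> dist z E0"
      using abs_le_norm4[where a = "S - S0" and b = "V - V0" and c = I1 and d = I2] by (simp_all add: z dist_norm)
    moreover have "dist z E0 < \<rho>1" "dist z E0 < \<rho>2"
      using \<open>dist z E0 < \<rho>\<close> by (simp_all add: \<rho>_def)
    moreover have "0 \<le> S" "0 \<le> V" "0 \<le> I1" "0 \<le> I2"
      using \<open>z \<in> orthant4\<close> by (simp_all add: z orthant4_def)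
    ultimately have bounds: "\<bar>S - S0\<bar> \<le> \<rho>" "\<bar>V - V0\<bar> \<le> \<rho>" "f1 S I1 \<le> \<alpha>1 - c"
      "f2 S I2 + k * V \<le> \<alpha>2 - c" "0 \<le> k * V" "0 \<le> I1" "0 \<le> I2"
      using \<open>dist z E0 < \<rho>\<close> \<rho>1[of z] \<rho>2[of z] pos by (simp_all add: z less_imp_le)
    show "lyapunov_deriv z (X z) \<le> - min lam (min \<mu> (c / 2)) * lyapunov z"
      unfolding lyapunov_deriv_along_field[OF z \<open>z \<in> orthant4\<close>]
      unfolding z lyapunov_def fst_conv snd_conv
      by (rule lyapunov_derivative_estimate[OF lyapunov_weight(2)])
        (use bounds \<open>0 \<le> S\<close> lyapunov_weight(1) \<open>0 < c\<close> pos \<open>4 * \<rho> * (1 + ?A) * (\<alpha>1 + \<alpha>2) \<le> c\<close>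
           incidence_okD(4)[OF incidence(1), of S I1] incidence_okD(4)[OF incidence(2), of S I2]
           in auto)
  qed
qed

lemma locally_asymptotically_stable_if_no_invasion:
  assumes "f1 S0 0 < \<alpha>1" "f2 S0 0 + k * V0 < \<alpha>2"
  shows "locally_asymptotically_stable X orthant4 E0"
proof -
  obtain \<rho> \<kappa> where "0 < \<rho>" "0 < \<kappa>"
    and "\<And>z. z \<in> orthant4 \<Longrightarrow> dist z E0 < \<rho> \<Longrightarrow> lyapunov_deriv z (X z) \<le> - \<kappa> * lyapunov z"
    using lyapunov_decreases_near_E0[OF assms] by blast
  then show ?thesis
    using lyapunov_has_derivative lyapunov_nonneg lyapunov_E0 lyapunov_small_imp_close
    by (intro locally_asymptotically_stable_if_lyapunov[where W = lyapunov and W' = lyapunov_deriv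
          and \<rho> = \<rho> and \<kappa> = \<kappa>]) auto
qed

end

theorem mainTheorem6:
  fixes \<Lambda> \<mu> r k \<gamma>1 \<gamma>2 v1 v2 :: real
    and F1 f1 F2 f2 :: "real \<Rightarrow> real \<Rightarrow> real"
  assumes "\<Lambda> > 0" "\<mu> > 0" "r > 0" "k > 0" "\<gamma>1 > 0" "\<gamma>2 > 0" "v1 \<ge> 0" "v2 \<ge> 0"
    and "incidence_ok F1 f1" "incidence_ok F2 f2"
  shows "let lam = r + \<mu>; \<alpha>1 = \<gamma>1 + v1 + \<mu>; \<alpha>2 = \<gamma>2 + v2 + \<mu>;
             S0 = \<Lambda> / lam;
             \<sigma>1 = deriv (\<lambda>I. F1 S0 I) 0; \<sigma>2 = deriv (\<lambda>I. F2 S0 I) 0;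
             R1 = \<sigma>1 / \<alpha>1;
             R2 = \<sigma>2 / \<alpha>2 + k * r * \<Lambda> / (\<alpha>2 * \<mu> * lam);
             R0 = max R1 R2;
             X = model_rhs \<Lambda> \<mu> r k \<gamma>1 \<gamma>2 v1 v2 F1 F2;
             E0 = (\<Lambda> / lam, r * \<Lambda> / (\<mu> * lam), 0, 0)
         in (R0 > 1 \<longrightarrow> unstable X orthant4 E0) \<and>
            (R0 < 1 \<longrightarrow> locally_asymptotically_stable X orthant4 E0)"
proof -
  interpret vaccination_model \<Lambda> \<mu> r k \<gamma>1 \<gamma>2 v1 v2 F1 f1 F2 f2
    using assms by unfold_locales
  have "0 \<le> S0" "0 < \<alpha>1" "0 < \<alpha>2"
    using assms by simp_all
  have R1: "deriv (\<lambda>I. F1 S0 I) 0 / \<alpha>1 = f1 S0 0 / \<alpha>1"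
    using incidence_ok_deriv_at_0[OF incidence(1) \<open>0 \<le> S0\<close>] by simp
  have R2: "deriv (\<lambda>I. F2 S0 I) 0 / \<alpha>2 + k * r * \<Lambda> / (\<alpha>2 * \<mu> * lam) = (f2 S0 0 + k * V0) / \<alpha>2"
    using incidence_ok_deriv_at_0[OF incidence(2) \<open>0 \<le> S0\<close>] by (simp add: add_divide_distrib mult_ac)
  have "1 < max (f1 S0 0 / \<alpha>1) ((f2 S0 0 + k * V0) / \<alpha>2) \<Longrightarrow> unstable X orthant4 E0"
    using unstable_if_I1_invades unstable_if_I2_invades \<open>0 < \<alpha>1\<close> \<open>0 < \<alpha>2\<close>
    by (auto simp: less_max_iff_disj less_divide_eq)
  moreover have "max (f1 S0 0 / \<alpha>1) ((f2 S0 0 + k * V0) / \<alpha>2) < 1 \<Longrightarrow>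
                   locally_asymptotically_stable X orthant4 E0"
    using \<open>0 < \<alpha>1\<close> \<open>0 < \<alpha>2\<close>
    by (intro locally_asymptotically_stable_if_no_invasion) (simp_all add: divide_less_eq)
  ultimately show ?thesis
    unfolding Let_def R1 R2 by blast
qed

end
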